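(* Let $n,m\ge 3$ and let $G=P_n\square P_m$ be the grid graph. Every minimal resolving set of $G$ contains two boundary vertices lying on opposite sides of the grid.
   Context: The grid graph $P_n\square P_m$ has vertex set $\{(i,j):0\le i\le n-1,\ 0\le j\le m-1\}$, with $(i,j)$ adjacent to $(k,l)$ iff $|i-k|+|j-l|=1$; distance $d((i,j),(k,l))=|i-k|+|j-l|$. A vertex $w$ resolves $u,v$ if $d(w,u)\ne d(w,v)$; a set $R$ is resolving if every pair of distinct vertices is resolved by some vertex of $R$; a minimal resolving set is a resolving set $R$ such that no $R\setminus\{x\}$, $x\in R$, is resolving. Boundary vertices are the vertices of degree 2 or 3. The sides of the grid are the four lines with first coordinate $0$, first coordinate $n-1$, second coordinate $0$, second coordinate $m-1$; two sides are opposite if they share no vertex. Two boundary vertices lie on opposite sides if one lies on a side and the other on the opposite side. *)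

theory Defs
  imports Main
begin

type_synonym vertex = "nat \<times> nat"

definition grid_vertices :: "nat \<Rightarrow> nat \<Rightarrow> vertex set" where
  "grid_vertices n m = {(i, j). i < n \<and> j < m}"

definition grid_dist :: "vertex \<Rightarrow> vertex \<Rightarrow> nat" where
  "grid_dist u v = nat \<bar>int (fst u) - int (fst v)\<bar> + nat \<bar>int (snd u) - int (snd v)\<bar>"

definition grid_adj :: "nat \<Rightarrow> nat \<Rightarrow> vertex \<Rightarrow> vertex \<Rightarrow> bool" where
  "grid_adj n m u v \<longleftrightarrow> u \<in> grid_vertices n m \<and> v \<in> grid_vertices n m \<and> grid_dist u v = 1"

definition grid_degree :: "nat \<Rightarrow> nat \<Rightarrow> vertex \<Rightarrow> nat" where
  "grid_degree n m v = card {u. grid_adj n m v u}"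

definition boundary_vertex :: "nat \<Rightarrow> nat \<Rightarrow> vertex \<Rightarrow> bool" where
  "boundary_vertex n m v \<longleftrightarrow> v \<in> grid_vertices n m \<and> grid_degree n m v \<in> {2, 3}"

definition resolves :: "vertex \<Rightarrow> vertex \<Rightarrow> vertex \<Rightarrow> bool" where
  "resolves w u v \<longleftrightarrow> grid_dist w u \<noteq> grid_dist w v"

definition resolving_set :: "nat \<Rightarrow> nat \<Rightarrow> vertex set \<Rightarrow> bool" where
  "resolving_set n m R \<longleftrightarrow> R \<subseteq> grid_vertices n m \<and>
     (\<forall>u\<in>grid_vertices n m. \<forall>v\<in>grid_vertices n m. u \<noteq> v \<longrightarrow> (\<exists>w\<in>R. resolves w u v))"

definition minimal_resolving_set :: "nat \<Rightarrow> nat \<Rightarrow> vertex set \<Rightarrow> bool" where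
  "minimal_resolving_set n m R \<longleftrightarrow> resolving_set n m R \<and>
     (\<forall>x\<in>R. \<not> resolving_set n m (R - {x}))"

definition on_opposite_sides :: "nat \<Rightarrow> nat \<Rightarrow> vertex \<Rightarrow> vertex \<Rightarrow> bool" where
  "on_opposite_sides n m u v \<longleftrightarrow>
     (fst u = 0 \<and> fst v = n - 1) \<or> (fst u = n - 1 \<and> fst v = 0) \<or>
     (snd u = 0 \<and> snd v = m - 1) \<or> (snd u = m - 1 \<and> snd v = 0)"

end

theory Submission
  imports Defs
begin

text \<open>Near each corner of the grid, the two neighbours of the corner can only be resolved by a
  vertex on one of the two sides meeting at that corner. A resolving set therefore contains, for
  each of the four corners, a vertex on a side through it; going around the four corners, two of
  these vertices must lie on opposite sides.\<close>

lemma mem_grid_vertices_iff: "v \<in> grid_vertices n m \<longleftrightarrow> fst v < n \<and> snd v < m"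
  by (cases v) (simp add: grid_vertices_def)

lemma grid_adj_iff:
  "grid_adj n m (i, j) (k, l) \<longleftrightarrow> i < n \<and> j < m \<and> k < n \<and> l < m \<and>
     ((k = i \<and> (l = j + 1 \<or> j = l + 1)) \<or> (l = j \<and> (k = i + 1 \<or> i = k + 1)))"
  unfolding grid_adj_def grid_vertices_def grid_dist_def by auto

lemma grid_degree_in_2_3:
  assumes "{u. grid_adj n m v u} \<subseteq> {a, b, c}"
    and "grid_adj n m v a" "grid_adj n m v b" "a \<noteq> b"
  shows "grid_degree n m v \<in> {2, 3}"
proof -
  have fin: "finite {u. grid_adj n m v u}"
    using assms(1) finite_subset by blast
  have "card {u. grid_adj n m v u} \<le> card {a, b, c}"
    using card_mono[OF _ assms(1)] by simp
  also have "\<dots> \<le> 3"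
    by (simp add: card_insert_le_m1)
  finally have le3: "card {u. grid_adj n m v u} \<le> 3" .
  have "{a, b} \<subseteq> {u. grid_adj n m v u}"
    using assms(2,3) by blast
  then have "card {a, b} \<le> card {u. grid_adj n m v u}"
    by (rule card_mono[OF fin])
  with assms(4) le3 show ?thesis
    unfolding grid_degree_def by auto
qed

lemma boundary_vertex_if_on_side:
  assumes "n \<ge> 2" "m \<ge> 2" "v \<in> grid_vertices n m"
    and "fst v = 0 \<or> fst v = n - 1 \<or> snd v = 0 \<or> snd v = m - 1"
  shows "boundary_vertex n m v"
proof -
  obtain i j where v: "v = (i, j)" by force
  have ij: "i < n" "j < m"
    using assms(3) v unfolding grid_vertices_def by auto
  define i' where "i' = (if i = 0 then 1 else i - 1)"
  define j' where "j' = (if j = 0 then 1 else j - 1)"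
  have i': "grid_adj n m (i, j) (i', j)"
    using ij assms(1,2) unfolding grid_adj_iff i'_def by auto
  have j': "grid_adj n m (i, j) (i, j')"
    using ij assms(1,2) unfolding grid_adj_iff j'_def by auto
  have "grid_degree n m (i, j) \<in> {2, 3}"
    using assms(4) unfolding v fst_conv snd_conv
  proof (elim disjE)
    assume side: "i = 0"
    show ?thesis
      by (rule grid_degree_in_2_3[where a="(1, j)" and b="(i, j')"
            and c="(0, if j = 0 then 1 else j + 1)"])
        (use side ij assms(1,2) j' in \<open>auto simp: grid_adj_iff j'_def\<close>)
  next
    assume side: "i = n - 1"
    show ?thesis
      by (rule grid_degree_in_2_3[where a="(n - 2, j)" and b="(i, j')"
            and c="(i, if j = 0 then 1 else j + 1)"])
        (use side ij assms(1,2) j' in \<open>auto simp: grid_adj_iff j'_def\<close>)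
  next
    assume side: "j = 0"
    show ?thesis
      by (rule grid_degree_in_2_3[where a="(i, 1)" and b="(i', j)"
            and c="(if i = 0 then 1 else i + 1, j)"])
        (use side ij assms(1,2) i' in \<open>auto simp: grid_adj_iff i'_def\<close>)
  next
    assume side: "j = m - 1"
    show ?thesis
      by (rule grid_degree_in_2_3[where a="(i, m - 2)" and b="(i', j)"
            and c="(if i = 0 then 1 else i + 1, j)"])
        (use side ij assms(1,2) i' in \<open>auto simp: grid_adj_iff i'_def\<close>)
  qed
  then show ?thesis
    using assms(3) unfolding boundary_vertex_def v by simp
qed

lemma boundary_vertices_if_on_opposite_sides:
  assumes "n \<ge> 2" "m \<ge> 2" "u \<in> grid_vertices n m" "v \<in> grid_vertices n m"
    and "on_opposite_sides n m u v"
  shows "boundary_vertex n m u \<and> boundary_vertex n m v"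
proof -
  have "fst u = 0 \<or> fst u = n - 1 \<or> snd u = 0 \<or> snd u = m - 1"
    and "fst v = 0 \<or> fst v = n - 1 \<or> snd v = 0 \<or> snd v = m - 1"
    using assms(5) unfolding on_opposite_sides_def by auto
  then show ?thesis
    using boundary_vertex_if_on_side[OF assms(1,2)] assms(3,4) by simp
qed

text \<open>In both lemmas the two vertices differ by one in each coordinate, so the difference of
  their distances from \<open>w\<close> is a sum of two terms \<open>\<plusminus>1\<close>; these cancel exactly when \<open>w\<close>
  lies outside the two quadrants on the right-hand side.\<close>

lemma resolves_diagonal_pair_iff:
  "resolves w (i, Suc j) (Suc i, j) \<longleftrightarrow>
     (fst w \<le> i \<and> Suc j \<le> snd w) \<or> (Suc i \<le> fst w \<and> snd w \<le> j)"
  unfolding resolves_def grid_dist_def by (cases w) auto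

lemma resolves_antidiagonal_pair_iff:
  "resolves w (i, j) (Suc i, Suc j) \<longleftrightarrow>
     (fst w \<le> i \<and> snd w \<le> j) \<or> (Suc i \<le> fst w \<and> Suc j \<le> snd w)"
  unfolding resolves_def grid_dist_def by (cases w) auto

lemma resolving_set_has_resolver:
  assumes "resolving_set n m R" "u \<in> grid_vertices n m" "v \<in> grid_vertices n m" "u \<noteq> v"
  shows "\<exists>w\<in>R. resolves w u v"
  using assms unfolding resolving_set_def by blast

lemma resolving_set_subset_grid: "resolving_set n m R \<Longrightarrow> R \<subseteq> grid_vertices n m"
  unfolding resolving_set_def by blast

lemma resolving_set_meets_sides_at_corners:
  assumes "resolving_set n m R" "n \<ge> 2" "m \<ge> 2"
  obtains a b c d where "{a, b, c, d} \<subseteq> R"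
    and "fst a = 0 \<or> snd a = 0" "snd b = 0 \<or> fst b = n - 1"
    and "fst c = 0 \<or> snd c = m - 1" "fst d = n - 1 \<or> snd d = m - 1"
proof -
  have in_grid: "fst w < n \<and> snd w < m" if "w \<in> R" for w
    using resolving_set_subset_grid[OF assms(1)] that by (auto simp: mem_grid_vertices_iff)
  have "\<exists>w\<in>R. resolves w (0, Suc 0) (Suc 0, 0)"
    using assms(2,3)
    by (intro resolving_set_has_resolver[OF assms(1)]) (auto simp: mem_grid_vertices_iff)
  then obtain a where a: "a \<in> R" "resolves a (0, Suc 0) (Suc 0, 0)" ..
  have "\<exists>w\<in>R. resolves w (n - 2, 0) (Suc (n - 2), Suc 0)"
    using assms(2,3)
    by (intro resolving_set_has_resolver[OF assms(1)]) (auto simp: mem_grid_vertices_iff)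
  then obtain b where b: "b \<in> R" "resolves b (n - 2, 0) (Suc (n - 2), Suc 0)" ..
  have "\<exists>w\<in>R. resolves w (0, m - 2) (Suc 0, Suc (m - 2))"
    using assms(2,3)
    by (intro resolving_set_has_resolver[OF assms(1)]) (auto simp: mem_grid_vertices_iff)
  then obtain c where c: "c \<in> R" "resolves c (0, m - 2) (Suc 0, Suc (m - 2))" ..
  have "\<exists>w\<in>R. resolves w (n - 2, Suc (m - 2)) (Suc (n - 2), m - 2)"
    using assms(2,3)
    by (intro resolving_set_has_resolver[OF assms(1)]) (auto simp: mem_grid_vertices_iff)
  then obtain d where d: "d \<in> R" "resolves d (n - 2, Suc (m - 2)) (Suc (n - 2), m - 2)" ..
  show thesis
  proof
    show "{a, b, c, d} \<subseteq> R"
      using a(1) b(1) c(1) d(1) by blast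
    show "fst a = 0 \<or> snd a = 0"
      using a(2) by (auto simp: resolves_diagonal_pair_iff)
    show "snd b = 0 \<or> fst b = n - 1"
      using b(2) in_grid[OF b(1)] assms(2) by (auto simp: resolves_antidiagonal_pair_iff)
    show "fst c = 0 \<or> snd c = m - 1"
      using c(2) in_grid[OF c(1)] assms(3) by (auto simp: resolves_antidiagonal_pair_iff)
    show "fst d = n - 1 \<or> snd d = m - 1"
      using d(2) in_grid[OF d(1)] assms(2,3) by (auto simp: resolves_diagonal_pair_iff)
  qed
qed

lemma opposite_sides_among_corner_vertices:
  assumes "fst a = 0 \<or> snd a = 0" "snd b = 0 \<or> fst b = n - 1"
    and "fst c = 0 \<or> snd c = m - 1" "fst d = n - 1 \<or> snd d = m - 1"
  shows "\<exists>u\<in>{a, b, c, d}. \<exists>v\<in>{a, b, c, d}. on_opposite_sides n m u v"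
proof -
  have "on_opposite_sides n m a d \<or> on_opposite_sides n m a b \<or> on_opposite_sides n m b d \<or>
        on_opposite_sides n m a c \<or> on_opposite_sides n m c d"
    using assms unfolding on_opposite_sides_def by argo
  then show ?thesis
    by blast
qed

theorem proposition2:
  fixes n m :: nat and R :: "vertex set"
  assumes "n \<ge> 3" and "m \<ge> 3"
    and "minimal_resolving_set n m R"
  shows "\<exists>u\<in>R. \<exists>v\<in>R. boundary_vertex n m u \<and> boundary_vertex n m v \<and>
           on_opposite_sides n m u v"
proof -
  have res: "resolving_set n m R"
    using assms(3) unfolding minimal_resolving_set_def by blast
  have n: "n \<ge> 2" and m: "m \<ge> 2"
    using assms(1,2) by simp_all
  obtain a b c d where abcd: "{a, b, c, d} \<subseteq> R"
    and "fst a = 0 \<or> snd a = 0" "snd b = 0 \<or> fst b = n - 1"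
    and "fst c = 0 \<or> snd c = m - 1" "fst d = n - 1 \<or> snd d = m - 1"
    by (rule resolving_set_meets_sides_at_corners[OF res n m])
  then obtain u v where uv: "u \<in> R" "v \<in> R" "on_opposite_sides n m u v"
    using opposite_sides_among_corner_vertices[of a b n c m d] by blast
  moreover have "boundary_vertex n m u \<and> boundary_vertex n m v"
    using uv resolving_set_subset_grid[OF res]
    by (intro boundary_vertices_if_on_opposite_sides[OF n m]) auto
  ultimately show ?thesis
    by blast
qed

end
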